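(* Let $\Pi$ be a homogeneous Poisson point process in $\mathbb{R}^2$ of unit intensity. Let $A=(-1/2,0)$, $B=(1/2,0)$, and let $C$ be the point of $\Pi$ nearest to $(0,0)$. Then the probability that triangle $ABC$ is acute equals \[ e^{-\pi/4}-\operatorname{erfc}\!\left(\sqrt{\pi}/2\right)=0.2458467223\ldots \]
   Context: $\operatorname{erfc}$ is the complementary error function. *)

theory Defs
  imports "HOL-Probability.Probability"
begin

definition erfc :: "real \<Rightarrow> real" where
  "erfc x = 2 / sqrt pi * (LBINT t:{x..}. exp (- (t ^ 2)))"

definition homogeneous_PPP :: "'w measure \<Rightarrow> ('w \<Rightarrow> (real \<times> real) set) \<Rightarrow> bool" where
  "homogeneous_PPP M P \<longleftrightarrow>
     prob_space M \<and>
     (\<forall>\<omega>\<in>space M. \<forall>B. bounded B \<longrightarrow> finite (P \<omega> \<inter> B)) \<and>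
     (\<forall>B\<in>sets lborel. bounded B \<longrightarrow>
        (\<lambda>\<omega>. card (P \<omega> \<inter> B)) \<in> measurable M (count_space UNIV) \<and>
        (\<forall>k::nat. measure M {\<omega>\<in>space M. card (P \<omega> \<inter> B) = k}
                   = measure lborel B ^ k / fact k * exp (- measure lborel B))) \<and>
     (\<forall>(Bs :: nat \<Rightarrow> (real \<times> real) set) n.
        (\<forall>i<n. Bs i \<in> sets lborel \<and> bounded (Bs i)) \<and> disjoint_family_on Bs {..<n} \<longrightarrow>
        prob_space.indep_vars M (\<lambda>_. count_space UNIV) (\<lambda>i \<omega>. card (P \<omega> \<inter> Bs i)) {..<n})"

definition acute_triangle :: "real \<times> real \<Rightarrow> real \<times> real \<Rightarrow> real \<times> real \<Rightarrow> bool" where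
  "acute_triangle A B C \<longleftrightarrow>
     (B - A) \<bullet> (C - A) > 0 \<and> (A - B) \<bullet> (C - B) > 0 \<and> (A - C) \<bullet> (B - C) > 0"

end

theory Submission
  imports Defs
begin

text \<open>The point \<open>C\<close> of the process nearest to the origin has density \<open>exp (- pi * |c|\<^sup>2)\<close>.
  For a Borel set \<open>S\<close> inside a thin annulus \<open>a \<le> |c| < b\<close> this follows from the counting
  laws by a squeeze: \<open>C\<close> lies in \<open>S\<close> only if \<open>S\<close> is hit while the open disc of radius \<open>a\<close>
  is empty, an event of probability at most \<open>exp (- pi * a\<^sup>2) * |S|\<close>; and \<open>C\<close> does lie in
  \<open>S\<close> if \<open>S\<close> holds exactly one point and the rest of the closed disc of radius \<open>b\<close> none,
  an event of probability \<open>exp (- pi * b\<^sup>2) * |S|\<close>. Cutting \<open>S\<close> into \<open>n\<close> annular slices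
  identifies the law of \<open>C\<close> up to an error \<open>O(1/n)\<close>, and monotone convergence extends
  this to unbounded \<open>S\<close>. The density factors as \<open>\<phi>(x) \<phi>(y)\<close> with \<open>\<phi>\<close> the centred
  normal density of variance \<open>1/(2 pi)\<close>, and \<open>ABC\<close> is acute exactly when
  \<open>|x| < 1/2 < |C|\<close>. So the probability is the normal mass \<open>1 - erfc (sqrt pi / 2)\<close>
  of the strip \<open>|x| < 1/2\<close> minus the mass \<open>1 - exp (- pi / 4)\<close> of the disc of radius \<open>1/2\<close>.\<close>

lemma exp_minus_diff_bounds:
  fixes x y :: real
  assumes "x \<le> y"
  shows "exp (- y) * (y - x) \<le> exp (- x) - exp (- y)"
    and "exp (- x) - exp (- y) \<le> exp (- x) * (y - x)"
proof -
  have "y - x \<le> exp (y - x) - 1"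
    using exp_ge_add_one_self[of "y - x"] by linarith
  then have "exp (- y) * (y - x) \<le> exp (- y) * (exp (y - x) - 1)"
    by (rule mult_left_mono) simp
  then show "exp (- y) * (y - x) \<le> exp (- x) - exp (- y)"
    by (simp add: algebra_simps flip: exp_add)
  have "1 - exp (x - y) \<le> y - x"
    using exp_ge_add_one_self[of "x - y"] by linarith
  then have "exp (- x) * (1 - exp (x - y)) \<le> exp (- x) * (y - x)"
    by (rule mult_left_mono) simp
  then show "exp (- x) - exp (- y) \<le> exp (- x) * (y - x)"
    by (simp add: algebra_simps flip: exp_add)
qed

lemma exp_minus_diff_le:
  fixes x y :: real
  assumes "0 \<le> x" "x \<le> y"
  shows "exp (- x) - exp (- y) \<le> y - x"
  using exp_minus_diff_bounds(2)[OF assms(2)] mult_left_le_one_le[of "y - x" "exp (- x)"] assms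
  by simp

lemma le_of_le_add_divide_nat:
  fixes x y K :: real
  assumes "\<And>n. 0 < n \<Longrightarrow> x \<le> y + K / real n"
  shows "x \<le> y"
proof (rule field_le_epsilon)
  fix e :: real assume "0 < e"
  obtain n :: nat where n: "\<bar>K\<bar> / e < real n" using reals_Archimedean2 by blast
  moreover have "0 \<le> \<bar>K\<bar> / e" using \<open>0 < e\<close> by simp
  ultimately have "0 < n" by linarith
  have "K / real n \<le> e"
    using n \<open>0 < e\<close> \<open>0 < n\<close> by (simp add: field_simps)
  then show "x \<le> y + e" using assms[OF \<open>0 < n\<close>] by linarith
qed

lemma measure_density_bounds:
  fixes f :: "'a \<Rightarrow> real"
  assumes f: "f \<in> borel_measurable M" and S: "S \<in> sets M" "emeasure M S < \<infinity>"
    and bounds: "\<And>x. x \<in> S \<Longrightarrow> a \<le> f x \<and> f x \<le> b" and "0 \<le> a"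
  shows "a * measure M S \<le> measure (density M f) S"
    and "measure (density M f) S \<le> b * measure M S"
proof -
  have b: "0 \<le> b" if "x \<in> S" for x using bounds[OF that] \<open>0 \<le> a\<close> by linarith
  have dens: "emeasure (density M f) S = (\<integral>\<^sup>+ x. ennreal (f x) * indicator S x \<partial>M)"
    using f S by (simp add: emeasure_density)
  have lower: "ennreal a * emeasure M S \<le> emeasure (density M f) S"
    unfolding dens using S bounds
    by (subst nn_integral_cmult_indicator[symmetric])
       (auto intro!: nn_integral_mono simp: indicator_def ennreal_leI)
  have upper: "emeasure (density M f) S \<le> ennreal b * emeasure M S" if "S \<noteq> {}"
    unfolding dens using S bounds
    by (subst nn_integral_cmult_indicator[symmetric])
       (auto intro!: nn_integral_mono simp: indicator_def ennreal_leI)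
  have fin: "emeasure (density M f) S < \<infinity>"
    using upper S by (cases "S = {}") (auto simp: ennreal_mult_less_top le_less_trans)
  have eM: "emeasure M S = ennreal (measure M S)" using S by (simp add: emeasure_eq_ennreal_measure)
  have eD: "emeasure (density M f) S = ennreal (measure (density M f) S)"
    using fin by (simp add: emeasure_eq_ennreal_measure)
  show "a * measure M S \<le> measure (density M f) S"
    using lower \<open>0 \<le> a\<close> unfolding eM eD by (simp add: ennreal_mult[symmetric])
  show "measure (density M f) S \<le> b * measure M S"
  proof (cases "S = {}")
    case False
    then have "0 \<le> b" using b by blast
    then show ?thesis using upper[OF False] unfolding eM eD by (simp add: ennreal_mult[symmetric])
  qed simp
qed

section \<open>Annuli in the plane\<close>

lemma measure_lborel_ball_pair: "0 \<le> r \<Longrightarrow> measure lborel (ball (c :: real \<times> real) r) = pi * r\<^sup>2"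
  by (simp add: content_ball unit_ball_vol_2 power2_eq_square)

lemma measure_lborel_cball_pair: "0 \<le> r \<Longrightarrow> measure lborel (cball (c :: real \<times> real) r) = pi * r\<^sup>2"
  by (simp add: content_cball unit_ball_vol_2 power2_eq_square)

definition annulus :: "real \<Rightarrow> real \<Rightarrow> 'a :: real_normed_vector set" where
  "annulus a b = {c. a \<le> norm c \<and> norm c < b}"

lemma mem_annulus [simp]: "c \<in> annulus a b \<longleftrightarrow> a \<le> norm c \<and> norm c < b"
  by (simp add: annulus_def)

lemma annulus_eq_ball_diff: "(annulus a b :: 'a :: real_normed_vector set) = ball 0 b - ball 0 a"
  by auto

lemma sets_annulus [measurable]: "annulus a b \<in> sets borel"
  by (simp add: annulus_eq_ball_diff)

lemma bounded_annulus: "bounded (annulus a b)"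
  by (rule bounded_subset[OF bounded_ball]) (auto simp: annulus_eq_ball_diff)

lemma measure_lborel_annulus_pair:
  assumes "0 \<le> a" "a \<le> b"
  shows "measure lborel (annulus a b :: (real \<times> real) set) = pi * (b\<^sup>2 - a\<^sup>2)"
  using assms unfolding annulus_eq_ball_diff
  by (subst measure_Diff) (auto simp: measure_lborel_ball_pair emeasure_ball algebra_simps)

lemma UN_annulus_slices:
  assumes "0 < h"
  shows "(\<Union>k<n. annulus (real k * h) (real (Suc k) * h)) = (ball 0 (real n * h) :: 'a :: real_normed_vector set)"
proof (intro equalityI subsetI)
  fix c :: 'a assume "c \<in> ball 0 (real n * h)"
  then have c: "norm c < real n * h" by simp
  define k where "k = nat \<lfloor>norm c / h\<rfloor>"
  have "real k = of_int \<lfloor>norm c / h\<rfloor>"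
    unfolding k_def using assms by simp
  then have k: "real k \<le> norm c / h" "norm c / h < real k + 1"
    using of_int_floor_le[of "norm c / h"] real_of_int_floor_add_one_gt[of "norm c / h"] by linarith+
  then have "real k * h \<le> norm c" "norm c < real (Suc k) * h"
    using assms by (simp_all add: field_simps)
  then have "c \<in> annulus (real k * h) (real (Suc k) * h)" by simp
  moreover have "k < n"
  proof -
    have "real k * h < real n * h" using \<open>real k * h \<le> norm c\<close> c by linarith
    then show ?thesis using assms by simp
  qed
  ultimately show "c \<in> (\<Union>k<n. annulus (real k * h) (real (Suc k) * h))" by blast
next
  fix c assume "c \<in> (\<Union>k<n. annulus (real k * h) (real (Suc k) * h))"
  then obtain k where "k < n" "norm c < real (Suc k) * h" by auto
  moreover have "real (Suc k) * h \<le> real n * h" using \<open>k < n\<close> assms by simp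
  ultimately show "c \<in> ball 0 (real n * h)" by simp
qed

lemma disjoint_family_annulus_slices:
  "disjoint_family (\<lambda>k. annulus (real k * h) (real (Suc k) * h) :: 'a :: real_normed_vector set)"
proof (unfold disjoint_family_on_def, intro ballI impI)
  fix i j :: nat assume "i \<noteq> j"
  show "annulus (real i * h) (real (Suc i) * h) \<inter> annulus (real j * h) (real (Suc j) * h) = ({} :: 'a set)"
  proof (rule ccontr)
    assume "annulus (real i * h) (real (Suc i) * h) \<inter> annulus (real j * h) (real (Suc j) * h) \<noteq> ({} :: 'a set)"
    then obtain c :: 'a where "real i * h \<le> norm c" "norm c < real (Suc i) * h"
      "real j * h \<le> norm c" "norm c < real (Suc j) * h" by auto
    then have "real i * h < real (Suc j) * h" "real j * h < real (Suc i) * h" by linarith+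
    then have "0 < h" by (simp add: algebra_simps)
    then show False using \<open>i \<noteq> j\<close> \<open>real i * h < _\<close> \<open>real j * h < _\<close> by simp
  qed
qed

lemma annulus_slice_width_le:
  assumes "k < n" "0 \<le> h"
  shows "(real (Suc k) * h)\<^sup>2 - (real k * h)\<^sup>2 \<le> 2 * (real n * h) * h"
proof -
  have "(real (Suc k) * h)\<^sup>2 - (real k * h)\<^sup>2 = (2 * real k + 1) * h\<^sup>2"
    by (simp add: power2_eq_square algebra_simps)
  also have "\<dots> \<le> 2 * real n * h\<^sup>2"
    using assms by (intro mult_right_mono) auto
  finally show ?thesis by (simp add: power2_eq_square mult_ac)
qed

section \<open>The Gaussian law of the nearest point\<close>

definition gauss_pi :: "real measure" where
  "gauss_pi = density lborel (\<lambda>x. exp (- pi * x\<^sup>2))"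

lemma normal_density_pi: "normal_density 0 (1 / sqrt (2 * pi)) = (\<lambda>x. exp (- pi * x\<^sup>2))"
  by (simp add: fun_eq_iff normal_density_def field_simps)

lemma prob_space_gauss_pi: "prob_space gauss_pi"
  using prob_space_normal_density[where \<mu> = 0 and \<sigma> = "1 / sqrt (2 * pi)"]
  by (simp add: gauss_pi_def normal_density_pi)

lemma sets_gauss_pi [simp, measurable_cong]: "sets gauss_pi = sets borel"
  by (simp add: gauss_pi_def)

lemma measure_gauss_pi:
  assumes "A \<in> sets borel"
  shows "measure gauss_pi A = (\<integral>x. indicator A x * exp (- pi * x\<^sup>2) \<partial>lborel)"
proof -
  let ?f = "\<lambda>x. exp (- pi * x\<^sup>2) :: real"
  have "integrable lborel ?f"
    using integrable_normal_moment[where \<mu> = 0 and \<sigma> = "1 / sqrt (2 * pi)" and k = 0]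
    unfolding normal_density_pi by simp
  then have integrable: "integrable lborel (\<lambda>x. indicator A x * ?f x)"
    using assms integrable_mult_indicator[of A lborel ?f] by simp
  have "emeasure gauss_pi A = (\<integral>\<^sup>+x. ennreal (indicator A x * ?f x) \<partial>lborel)"
    using assms unfolding gauss_pi_def
    by (subst emeasure_density) (auto intro!: nn_integral_cong simp: indicator_def)
  also have "\<dots> = ennreal (\<integral>x. indicator A x * ?f x \<partial>lborel)"
    using integrable by (rule nn_integral_eq_integral) simp
  finally show ?thesis by (simp add: measure_def integral_nonneg)
qed

lemma measure_gauss_pi_atLeast: "measure gauss_pi {a..} = erfc (sqrt pi * a) / 2"
proof -
  have "(LBINT t:{sqrt pi * a..}. exp (- t\<^sup>2))
      = (\<integral>t. indicator {sqrt pi * a..} t * exp (- t\<^sup>2) \<partial>lborel)"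
    by (simp add: set_lebesgue_integral_def)
  also have "\<dots> = sqrt pi * (\<integral>x. indicator {sqrt pi * a..} (sqrt pi * x) * exp (- (sqrt pi * x)\<^sup>2) \<partial>lborel)"
    using lborel_integral_real_affine[of "sqrt pi" "\<lambda>t. indicator {sqrt pi * a..} t * exp (- t\<^sup>2)" 0]
    by simp
  also have "(\<lambda>x. indicator {sqrt pi * a..} (sqrt pi * x) * exp (- (sqrt pi * x)\<^sup>2))
      = (\<lambda>x. indicator {a..} x * exp (- pi * x\<^sup>2) :: real)"
    by (auto simp: indicator_def power_mult_distrib)
  finally show ?thesis
    by (simp add: erfc_def measure_gauss_pi)
qed

lemma measure_gauss_pi_atMost: "measure gauss_pi {..-a} = measure gauss_pi {a..}"
proof -
  have "(\<integral>x. indicator {..-a} x * exp (- pi * x\<^sup>2) \<partial>lborel)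
      = (\<integral>x. indicator {..-a} (- x) * exp (- pi * (- x)\<^sup>2) \<partial>lborel)"
    using lborel_integral_real_affine[of "-1" "\<lambda>x. indicator {..-a} x * exp (- pi * x\<^sup>2)" 0]
    by simp
  also have "\<dots> = (\<integral>x. indicator {a..} x * exp (- pi * x\<^sup>2) \<partial>lborel)"
    by (auto simp: indicator_def intro!: Bochner_Integration.integral_cong)
  finally show ?thesis by (simp add: measure_gauss_pi)
qed

lemma measure_gauss_pi_centered:
  assumes "0 < a"
  shows "measure gauss_pi {-a<..<a} = 1 - erfc (sqrt pi * a)"
proof -
  interpret prob_space gauss_pi by (rule prob_space_gauss_pi)
  have "{-a<..<a} = space gauss_pi - ({..-a} \<union> {a..})"
    by (auto simp: gauss_pi_def)
  moreover have "prob ({..-a} \<union> {a..}) = prob {..-a} + prob {a..}"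
    using assms by (intro finite_measure_Union) auto
  ultimately show ?thesis
    by (simp add: prob_compl measure_gauss_pi_atMost measure_gauss_pi_atLeast)
qed

definition nearest_law :: "(real \<times> real) measure" where
  "nearest_law = density lborel (\<lambda>c. exp (- pi * (norm c)\<^sup>2))"

lemma sets_nearest_law [simp, measurable_cong]: "sets nearest_law = sets borel"
  by (simp add: nearest_law_def)

lemma nearest_law_eq_pair_measure: "nearest_law = gauss_pi \<Otimes>\<^sub>M gauss_pi"
proof -
  have "gauss_pi \<Otimes>\<^sub>M gauss_pi = density (lborel \<Otimes>\<^sub>M lborel)
      (\<lambda>(x, y). ennreal (exp (- pi * x\<^sup>2)) * ennreal (exp (- pi * y\<^sup>2)))"
    unfolding gauss_pi_def
    using sigma_finite_lborel prob_space_imp_sigma_finite[OF prob_space_gauss_pi[unfolded gauss_pi_def]]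
    by (intro pair_measure_density) simp_all
  also have "(\<lambda>(x, y). ennreal (exp (- pi * x\<^sup>2)) * ennreal (exp (- pi * y\<^sup>2)))
      = (\<lambda>c :: real \<times> real. ennreal (exp (- pi * (norm c)\<^sup>2)))"
  proof (intro ext, clarify)
    fix x y :: real
    have "(norm (x, y))\<^sup>2 = x\<^sup>2 + y\<^sup>2" by (simp add: norm_Pair)
    then show "ennreal (exp (- pi * x\<^sup>2)) * ennreal (exp (- pi * y\<^sup>2)) = ennreal (exp (- pi * (norm (x, y))\<^sup>2))"
      by (simp add: algebra_simps flip: ennreal_mult exp_add)
  qed
  finally show ?thesis by (simp add: nearest_law_def lborel_prod)
qed

lemma prob_space_nearest_law: "prob_space nearest_law"
  unfolding nearest_law_eq_pair_measure by (intro prob_space_pair prob_space_gauss_pi)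

lemma measure_nearest_law_Times_UNIV:
  assumes "A \<in> sets borel"
  shows "measure nearest_law (A \<times> UNIV) = measure gauss_pi A"
proof -
  interpret gauss: prob_space gauss_pi by (rule prob_space_gauss_pi)
  have "emeasure nearest_law (A \<times> UNIV) = emeasure gauss_pi A * emeasure gauss_pi UNIV"
    unfolding nearest_law_eq_pair_measure using assms
    by (intro gauss.emeasure_pair_measure_Times) (simp_all)
  also have "emeasure gauss_pi UNIV = 1"
    using gauss.emeasure_space_1 by (simp add: gauss_pi_def)
  finally show ?thesis by (simp add: measure_def)
qed

lemma measure_nearest_law_bounds:
  assumes "S \<in> sets borel" "S \<subseteq> annulus a b" "0 \<le> a"
  shows "exp (- pi * b\<^sup>2) * measure lborel S \<le> measure nearest_law S"
    and "measure nearest_law S \<le> exp (- pi * a\<^sup>2) * measure lborel S"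
proof -
  have "emeasure lborel S < \<infinity>"
    using assms bounded_annulus by (intro emeasure_bounded_finite) (rule bounded_subset)
  moreover have "exp (- pi * b\<^sup>2) \<le> exp (- pi * (norm c)\<^sup>2) \<and> exp (- pi * (norm c)\<^sup>2) \<le> exp (- pi * a\<^sup>2)"
    if "c \<in> S" for c
    using that assms by (auto intro!: power_mono)
  ultimately show "exp (- pi * b\<^sup>2) * measure lborel S \<le> measure nearest_law S"
    and "measure nearest_law S \<le> exp (- pi * a\<^sup>2) * measure lborel S"
    using assms measure_density_bounds[of "\<lambda>c. exp (- pi * (norm c)\<^sup>2)" lborel S
        "exp (- pi * b\<^sup>2)" "exp (- pi * a\<^sup>2)"]
    unfolding nearest_law_def by simp_all
qed

lemma measure_nearest_law_annulus_approx:
  assumes "0 \<le> a" "a \<le> b"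
  shows "\<bar>measure nearest_law (annulus a b) - (exp (- pi * a\<^sup>2) - exp (- pi * b\<^sup>2))\<bar>
    \<le> (pi * (b\<^sup>2 - a\<^sup>2))\<^sup>2"
proof -
  let ?\<Delta> = "pi * (b\<^sup>2 - a\<^sup>2)"
  have area: "measure lborel (annulus a b :: (real \<times> real) set) = ?\<Delta>"
    using assms by (rule measure_lborel_annulus_pair)
  have "pi * a\<^sup>2 \<le> pi * b\<^sup>2" "0 \<le> ?\<Delta>"
    using assms by (simp_all add: power_mono)
  then have "exp (- pi * b\<^sup>2) * ?\<Delta> \<le> exp (- pi * a\<^sup>2) - exp (- pi * b\<^sup>2)"
    "exp (- pi * a\<^sup>2) - exp (- pi * b\<^sup>2) \<le> exp (- pi * a\<^sup>2) * ?\<Delta>"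
    "exp (- pi * a\<^sup>2) - exp (- pi * b\<^sup>2) \<le> ?\<Delta>"
    using exp_minus_diff_bounds[of "pi * a\<^sup>2" "pi * b\<^sup>2"] exp_minus_diff_le[of "pi * a\<^sup>2" "pi * b\<^sup>2"]
    by (simp_all add: right_diff_distrib)
  moreover from this(3) \<open>0 \<le> ?\<Delta>\<close>
  have "(exp (- pi * a\<^sup>2) - exp (- pi * b\<^sup>2)) * ?\<Delta> \<le> ?\<Delta> * ?\<Delta>"
    by (rule mult_right_mono)
  moreover have "exp (- pi * b\<^sup>2) * ?\<Delta> \<le> measure nearest_law (annulus a b)"
    "measure nearest_law (annulus a b) \<le> exp (- pi * a\<^sup>2) * ?\<Delta>"
    using measure_nearest_law_bounds[of "annulus a b" a b] area assms by simp_all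
  ultimately show ?thesis
    by (simp add: abs_le_iff left_diff_distrib power2_eq_square)
qed

lemma measure_nearest_law_ball:
  assumes "0 \<le> r"
  shows "measure nearest_law (ball 0 r) = 1 - exp (- pi * r\<^sup>2)"
proof (cases "r = 0")
  case False
  with assms have "0 < r" by simp
  interpret law: prob_space nearest_law by (rule prob_space_nearest_law)
  have "\<bar>measure nearest_law (ball 0 r) - (1 - exp (- pi * r\<^sup>2))\<bar> \<le> 0 + 2 * pi\<^sup>2 * r ^ 4 / real n"
    if "0 < n" for n
  proof -
    define h where "h = r / real n"
    define A where "A k = (annulus (real k * h) (real (Suc k) * h) :: (real \<times> real) set)" for k
    define \<Delta> where "\<Delta> k = pi * ((real (Suc k) * h)\<^sup>2 - (real k * h)\<^sup>2)" for k
    have "0 < h" "real n * h = r" using \<open>0 < r\<close> \<open>0 < n\<close> by (auto simp: h_def)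
    then have ball_eq: "ball 0 r = (\<Union>k<n. A k)"
      using UN_annulus_slices[OF \<open>0 < h\<close>, of n, symmetric] by (simp add: A_def)
    have A: "A k \<in> sets borel" "emeasure lborel (A k) < \<infinity>" for k
      using emeasure_bounded_finite[OF bounded_annulus] by (auto simp: A_def)
    have disj: "disjoint_family_on A {..<n}"
      using disjoint_family_annulus_slices[of h] by (auto simp: A_def disjoint_family_on_def)
    have measure_A: "measure lborel (A k) = \<Delta> k" for k
      using \<open>0 < h\<close> by (simp add: A_def \<Delta>_def measure_lborel_annulus_pair mult_right_mono)
    then have \<Delta>_nonneg: "0 \<le> \<Delta> k" for k by (metis measure_nonneg)
    have "measure nearest_law (ball 0 r) = (\<Sum>k<n. measure nearest_law (A k))"
      unfolding ball_eq using A disj by (intro law.finite_measure_finite_Union) auto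
    moreover have "1 - exp (- pi * r\<^sup>2)
        = (\<Sum>k<n. exp (- pi * (real k * h)\<^sup>2) - exp (- pi * (real (Suc k) * h)\<^sup>2))"
      using sum_lessThan_telescope'[of "\<lambda>k. exp (- pi * (real k * h)\<^sup>2)" n] \<open>real n * h = r\<close>
      by simp
    ultimately have "measure nearest_law (ball 0 r) - (1 - exp (- pi * r\<^sup>2))
        = (\<Sum>k<n. measure nearest_law (A k) - (exp (- pi * (real k * h)\<^sup>2) - exp (- pi * (real (Suc k) * h)\<^sup>2)))"
      by (simp add: sum_subtractf)
    also have "\<bar>\<dots>\<bar> \<le> (\<Sum>k<n. \<Delta> k * \<Delta> k)"
    proof (intro order.trans[OF sum_abs] sum_mono)
      fix k
      have "0 \<le> real k * h" "real k * h \<le> real (Suc k) * h"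
        using \<open>0 < h\<close> by simp_all
      from measure_nearest_law_annulus_approx[OF this]
      show "\<bar>measure nearest_law (A k) - (exp (- pi * (real k * h)\<^sup>2) - exp (- pi * (real (Suc k) * h)\<^sup>2))\<bar>
          \<le> \<Delta> k * \<Delta> k"
        by (simp add: A_def \<Delta>_def power2_eq_square)
    qed
    also have "\<dots> \<le> (\<Sum>k<n. 2 * pi * r * h * \<Delta> k)"
    proof (rule sum_mono)
      fix k assume "k \<in> {..<n}"
      then have "\<Delta> k \<le> 2 * pi * r * h"
        using annulus_slice_width_le[of k n h] \<open>0 < h\<close> \<open>real n * h = r\<close> by (simp add: \<Delta>_def)
      then show "\<Delta> k * \<Delta> k \<le> 2 * pi * r * h * \<Delta> k" using \<Delta>_nonneg by (rule mult_right_mono)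
    qed
    also have "\<dots> = 2 * pi * r * h * measure lborel (ball (0 :: real \<times> real) r)"
      unfolding ball_eq using A disj
      by (subst measure_finite_Union) (auto simp: less_top measure_A sum_distrib_left)
    also have "\<dots> = 0 + 2 * pi\<^sup>2 * r ^ 4 / real n"
      using assms by (simp add: h_def measure_lborel_ball_pair power2_eq_square power4_eq_xxxx)
    finally show ?thesis .
  qed
  then have "\<bar>measure nearest_law (ball 0 r) - (1 - exp (- pi * r\<^sup>2))\<bar> \<le> 0"
    by (rule le_of_le_add_divide_nat)
  then show ?thesis by simp
qed simp

lemma acute_triangle_symmetric_base_iff:
  assumes "0 < a"
  shows "acute_triangle (- a, 0) (a, 0) C \<longleftrightarrow> \<bar>fst C\<bar> < a \<and> a < norm C"
proof (cases C)
  case (Pair x y)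
  have "a < norm C \<longleftrightarrow> a\<^sup>2 < x\<^sup>2 + y\<^sup>2"
    using assms real_sqrt_less_iff[of "a\<^sup>2" "x\<^sup>2 + y\<^sup>2"] by (simp add: Pair norm_Pair)
  moreover have "(a - - a) * (x - - a) > 0 \<longleftrightarrow> - a < x" "(- a - a) * (x - a) > 0 \<longleftrightarrow> x < a"
    using assms by (auto simp: zero_less_mult_iff mult_less_0_iff)
  ultimately show ?thesis
    by (auto simp: acute_triangle_def Pair abs_less_iff power2_eq_square algebra_simps)
qed

lemma sphere_null_sets_nearest_law: "sphere c r \<in> null_sets nearest_law"
proof -
  have "sphere c r \<in> null_sets lborel"
    using negligible_sphere[of c r]
    by (auto simp: null_sets_completion_iff negligible_iff_null_sets negligible_convex_frontier)
  then show ?thesis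
    unfolding nearest_law_def using AE_not_in[of "sphere c r" lborel]
    by (subst null_sets_density_iff) auto
qed

section \<open>Point counts of the Poisson process\<close>

locale unit_poisson_process =
  fixes M :: "'w measure" and P :: "'w \<Rightarrow> (real \<times> real) set"
  assumes homogeneous: "homogeneous_PPP M P"
begin

sublocale prob_space M
  using homogeneous by (simp add: homogeneous_PPP_def)

abbreviation npoints :: "'w \<Rightarrow> (real \<times> real) set \<Rightarrow> nat" where
  "npoints \<omega> B \<equiv> card (P \<omega> \<inter> B)"

lemma finite_points: "\<omega> \<in> space M \<Longrightarrow> bounded B \<Longrightarrow> finite (P \<omega> \<inter> B)"
  using homogeneous by (simp add: homogeneous_PPP_def)

lemma sets_npoints_event:
  assumes "B \<in> sets lborel" "bounded B"
  shows "{\<omega>\<in>space M. Q (npoints \<omega> B)} \<in> events"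
proof -
  have "(\<lambda>\<omega>. npoints \<omega> B) \<in> measurable M (count_space UNIV)"
    using homogeneous assms by (simp add: homogeneous_PPP_def)
  then have "(\<lambda>\<omega>. npoints \<omega> B) -` {k. Q k} \<inter> space M \<in> events"
    by (rule measurable_sets) simp
  then show ?thesis by (simp add: vimage_def Int_def conj_commute)
qed

lemma sets_npoints_event2:
  assumes "B1 \<in> sets lborel" "bounded B1" "B2 \<in> sets lborel" "bounded B2"
  shows "{\<omega>\<in>space M. Q1 (npoints \<omega> B1) \<and> Q2 (npoints \<omega> B2)} \<in> events"
proof -
  have "{\<omega>\<in>space M. Q1 (npoints \<omega> B1) \<and> Q2 (npoints \<omega> B2)}
    = {\<omega>\<in>space M. Q1 (npoints \<omega> B1)} \<inter> {\<omega>\<in>space M. Q2 (npoints \<omega> B2)}"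
    by auto
  then show ?thesis using assms by (simp add: sets.Int sets_npoints_event)
qed

lemma prob_npoints_eq:
  assumes "B \<in> sets lborel" "bounded B"
  shows "prob {\<omega>\<in>space M. npoints \<omega> B = k}
    = measure lborel B ^ k / fact k * exp (- measure lborel B)"
  using homogeneous assms by (simp add: homogeneous_PPP_def)

lemma prob_npoints_zero:
  "B \<in> sets lborel \<Longrightarrow> bounded B \<Longrightarrow> prob {\<omega>\<in>space M. npoints \<omega> B = 0} = exp (- measure lborel B)"
  using prob_npoints_eq[of B 0] by simp

lemma prob_npoints_one:
  "B \<in> sets lborel \<Longrightarrow> bounded B \<Longrightarrow>
    prob {\<omega>\<in>space M. npoints \<omega> B = 1} = measure lborel B * exp (- measure lborel B)"
  using prob_npoints_eq[of B 1] by simp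

lemma prob_npoints_pos:
  assumes "B \<in> sets lborel" "bounded B"
  shows "prob {\<omega>\<in>space M. 1 \<le> npoints \<omega> B} = 1 - exp (- measure lborel B)"
proof -
  have "{\<omega>\<in>space M. 1 \<le> npoints \<omega> B} = space M - {\<omega>\<in>space M. npoints \<omega> B = 0}" by auto
  then show ?thesis
    using prob_compl[OF sets_npoints_event[OF assms, of "\<lambda>k. k = 0"]] prob_npoints_zero[OF assms] by simp
qed

lemma prob_npoints_indep:
  assumes B1: "B1 \<in> sets lborel" "bounded B1" and B2: "B2 \<in> sets lborel" "bounded B2"
    and disjoint: "B1 \<inter> B2 = {}"
  shows "prob {\<omega>\<in>space M. npoints \<omega> B1 \<in> K1 \<and> npoints \<omega> B2 \<in> K2}
    = prob {\<omega>\<in>space M. npoints \<omega> B1 \<in> K1} * prob {\<omega>\<in>space M. npoints \<omega> B2 \<in> K2}"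
proof -
  define Bs where "Bs i = (if i = 0 then B1 else B2)" for i :: nat
  define Ks where "Ks i = (if i = 0 then K1 else K2)" for i :: nat
  have "disjoint_family_on Bs {..<2}"
    using disjoint by (auto simp: disjoint_family_on_def Bs_def less_2_cases_iff)
  moreover have "\<forall>i<2. Bs i \<in> sets lborel \<and> bounded (Bs i)"
    using B1 B2 by (simp add: Bs_def)
  ultimately have "indep_vars (\<lambda>_. count_space UNIV) (\<lambda>i \<omega>. npoints \<omega> (Bs i)) {..<2}"
    using homogeneous by (simp add: homogeneous_PPP_def)
  then have "prob (\<Inter>i\<in>{0,1}. (\<lambda>\<omega>. npoints \<omega> (Bs i)) -` Ks i \<inter> space M)
      = (\<Prod>i\<in>{0,1}. prob ((\<lambda>\<omega>. npoints \<omega> (Bs i)) -` Ks i \<inter> space M))"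
    by (rule indep_varsD) auto
  moreover have "(\<Inter>i\<in>{0,1}. (\<lambda>\<omega>. npoints \<omega> (Bs i)) -` Ks i \<inter> space M)
      = {\<omega>\<in>space M. npoints \<omega> B1 \<in> K1 \<and> npoints \<omega> B2 \<in> K2}"
    by (auto simp: Bs_def Ks_def)
  moreover have "(\<lambda>\<omega>. npoints \<omega> (Bs 0)) -` Ks 0 \<inter> space M = {\<omega>\<in>space M. npoints \<omega> B1 \<in> K1}"
    "(\<lambda>\<omega>. npoints \<omega> (Bs 1)) -` Ks 1 \<inter> space M = {\<omega>\<in>space M. npoints \<omega> B2 \<in> K2}"
    by (auto simp: Bs_def Ks_def)
  ultimately show ?thesis by simp
qed

section \<open>The law of the nearest point\<close>

definition nearest_in :: "(real \<times> real) set \<Rightarrow> 'w set" where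
  "nearest_in S = {\<omega>\<in>space M. \<exists>C\<in>P \<omega>. (\<forall>p\<in>P \<omega>. p \<noteq> C \<longrightarrow> norm C < norm p) \<and> C \<in> S}"

lemma nearest_in_eq_UN_Rats:
  "nearest_in S = (\<Union>b\<in>\<rat>. {\<omega>\<in>space M. npoints \<omega> (cball 0 b) = 1 \<and> npoints \<omega> (cball 0 b \<inter> S) = 1})"
proof (intro equalityI subsetI)
  fix \<omega> assume "\<omega> \<in> nearest_in S"
  then obtain C where \<omega>: "\<omega> \<in> space M" and C: "C \<in> P \<omega>" "C \<in> S"
    and nearest: "\<And>p. p \<in> P \<omega> \<Longrightarrow> p \<noteq> C \<Longrightarrow> norm C < norm p"
    unfolding nearest_in_def by blast
  define D where "D = insert (norm C + 1) (norm ` (P \<omega> \<inter> cball 0 (norm C + 1) - {C}))"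
  have "finite D"
    unfolding D_def using finite_points[OF \<omega>, of "cball 0 (norm C + 1)"] by simp
  moreover have "\<forall>d\<in>D. norm C < d"
    unfolding D_def using nearest by auto
  ultimately have "norm C < Min D"
    by (simp add: D_def)
  then obtain b where b: "b \<in> \<rat>" "norm C < b" "b < Min D"
    using Rats_dense_in_real by blast
  have "P \<omega> \<inter> cball 0 b = {C}"
  proof (intro equalityI subsetI)
    fix p assume p: "p \<in> P \<omega> \<inter> cball 0 b"
    have "Min D \<le> norm C + 1" using \<open>finite D\<close> by (simp add: D_def)
    then have "norm p \<le> norm C + 1" using p b by simp
    moreover have "norm p \<notin> D"
      using p b Min_le[OF \<open>finite D\<close>, of "norm p"] by force
    ultimately show "p \<in> {C}" using p by (auto simp: D_def)
  qed (use C b in simp)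
  moreover from this have "P \<omega> \<inter> (cball 0 b \<inter> S) = {C}" using C(2) by blast
  ultimately have "npoints \<omega> (cball 0 b) = 1" "npoints \<omega> (cball 0 b \<inter> S) = 1"
    by simp_all
  then show "\<omega> \<in> (\<Union>b\<in>\<rat>. {\<omega>\<in>space M. npoints \<omega> (cball 0 b) = 1 \<and> npoints \<omega> (cball 0 b \<inter> S) = 1})"
    using \<omega> b(1) by blast
next
  fix \<omega> assume "\<omega> \<in> (\<Union>b\<in>\<rat>. {\<omega>\<in>space M. npoints \<omega> (cball 0 b) = 1 \<and> npoints \<omega> (cball 0 b \<inter> S) = 1})"
  then obtain b where \<omega>: "\<omega> \<in> space M" and one: "npoints \<omega> (cball 0 b) = 1"
    and one_in_S: "npoints \<omega> (cball 0 b \<inter> S) = 1"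
    by blast
  obtain C where C: "P \<omega> \<inter> cball 0 b = {C}" using one by (auto simp: card_1_singleton_iff)
  then have "C \<in> S" using one_in_S by (cases "C \<in> S") (auto simp: Int_assoc[symmetric])
  moreover have "norm C < norm p" if "p \<in> P \<omega>" "p \<noteq> C" for p
  proof -
    have "p \<notin> cball 0 b" using C that by blast
    then have "b < norm p" by simp
    moreover have "norm C \<le> b" using C by auto
    ultimately show ?thesis by simp
  qed
  ultimately show "\<omega> \<in> nearest_in S" using \<omega> C unfolding nearest_in_def by blast
qed

lemma sets_nearest_in:
  assumes "S \<in> sets lborel"
  shows "nearest_in S \<in> events"
  unfolding nearest_in_eq_UN_Rats
  using assms by (intro sets.countable_UN'' countable_rat sets_npoints_event2)
    (auto intro: bounded_subset[of "cball 0 _"])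

lemma nearest_in_UN: "nearest_in (\<Union>i\<in>I. S i) = (\<Union>i\<in>I. nearest_in (S i))"
  unfolding nearest_in_def by blast

lemma nearest_in_mono: "S \<subseteq> T \<Longrightarrow> nearest_in S \<subseteq> nearest_in T"
  unfolding nearest_in_def by blast

lemma nearest_in_disjoint: "S \<inter> T = {} \<Longrightarrow> nearest_in S \<inter> nearest_in T = {}"
  unfolding nearest_in_def by (fastforce simp: disjoint_iff)

lemma prob_nearest_in_finite_UN:
  assumes "finite I" "disjoint_family_on S I" "\<And>i. i \<in> I \<Longrightarrow> S i \<in> sets lborel"
  shows "prob (nearest_in (\<Union>i\<in>I. S i)) = (\<Sum>i\<in>I. prob (nearest_in (S i)))"
  unfolding nearest_in_UN using assms
  by (intro finite_measure_finite_Union)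
    (auto simp: disjoint_family_on_def intro: sets_nearest_in intro!: nearest_in_disjoint)

lemma prob_nearest_in_le:
  assumes S: "S \<in> sets lborel" "bounded S" and t: "0 \<le> t" "\<And>c. c \<in> S \<Longrightarrow> t \<le> norm c"
  shows "prob (nearest_in S) \<le> exp (- pi * t\<^sup>2) * measure lborel S"
proof -
  have disjoint: "ball 0 t \<inter> S = {}"
    using t(2) by (metis disjoint_iff mem_ball_0 not_less)
  let ?U = "{\<omega>\<in>space M. npoints \<omega> (ball 0 t) \<in> {0} \<and> npoints \<omega> S \<in> {k. 1 \<le> k}}"
  have "nearest_in S \<subseteq> ?U"
  proof
    fix \<omega> assume "\<omega> \<in> nearest_in S"
    then obtain C where \<omega>: "\<omega> \<in> space M" and C: "C \<in> P \<omega>" "C \<in> S"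
      and nearest: "\<And>p. p \<in> P \<omega> \<Longrightarrow> p \<noteq> C \<Longrightarrow> norm C < norm p"
      unfolding nearest_in_def by blast
    have "P \<omega> \<inter> ball 0 t = {}"
      using nearest t(2)[OF C(2)] by (fastforce simp: not_less[symmetric])
    moreover have "npoints \<omega> S \<noteq> 0" using finite_points[OF \<omega> S(2)] C by auto
    ultimately show "\<omega> \<in> ?U" using \<omega> by simp
  qed
  then have "prob (nearest_in S) \<le> prob ?U"
    using S by (intro finite_measure_mono sets_npoints_event2) auto
  also have "prob ?U = exp (- pi * t\<^sup>2) * (1 - exp (- measure lborel S))"
    using S t disjoint prob_npoints_zero[of "ball 0 t"] prob_npoints_pos[OF S]
    by (subst prob_npoints_indep) (auto simp: measure_lborel_ball_pair)
  also have "\<dots> \<le> exp (- pi * t\<^sup>2) * measure lborel S"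
    using exp_ge_add_one_self[of "- measure lborel S"] by (intro mult_left_mono) auto
  finally show ?thesis .
qed

lemma prob_nearest_in_ge:
  assumes S: "S \<in> sets lborel" "S \<subseteq> cball 0 t" and "0 \<le> t"
  shows "exp (- pi * t\<^sup>2) * measure lborel S \<le> prob (nearest_in S)"
proof -
  have bounded: "bounded S" "bounded (cball 0 t - S)"
    using S by (auto intro: bounded_subset[OF bounded_cball])
  let ?L = "{\<omega>\<in>space M. npoints \<omega> (cball 0 t - S) \<in> {0} \<and> npoints \<omega> S \<in> {1}}"
  have "?L \<subseteq> nearest_in S"
  proof
    fix \<omega> assume L: "\<omega> \<in> ?L"
    then have \<omega>: "\<omega> \<in> space M" by simp
    obtain C where C: "P \<omega> \<inter> S = {C}" using L by (auto simp: card_1_singleton_iff)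
    have "P \<omega> \<inter> (cball 0 t - S) = {}"
      using L finite_points[OF \<omega> bounded(2)] by simp
    then have "norm C < norm p" if "p \<in> P \<omega>" "p \<noteq> C" for p
      using that C S(2) by (fastforce simp: set_eq_iff)
    then show "\<omega> \<in> nearest_in S" unfolding nearest_in_def using \<omega> C by blast
  qed
  then have "prob ?L \<le> prob (nearest_in S)"
    using S by (intro finite_measure_mono sets_nearest_in) auto
  have "measure lborel (cball 0 t - S) = pi * t\<^sup>2 - measure lborel S"
    using S \<open>0 \<le> t\<close> by (subst measure_Diff) (auto simp: emeasure_cball measure_lborel_cball_pair)
  then have "prob ?L = exp (- (pi * t\<^sup>2 - measure lborel S)) * (measure lborel S * exp (- measure lborel S))"
    using S bounded
    by (subst prob_npoints_indep) (auto simp: prob_npoints_zero prob_npoints_one simp del: One_nat_def)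
  also have "\<dots> = exp (- pi * t\<^sup>2) * measure lborel S"
    by (simp add: mult.left_commute flip: exp_add)
  finally show ?thesis
    using \<open>prob ?L \<le> prob (nearest_in S)\<close> by simp
qed

lemma prob_nearest_in_annulus_approx:
  assumes S: "S \<in> sets borel" "S \<subseteq> annulus a b" and "0 \<le> a" "a \<le> b"
  shows "\<bar>prob (nearest_in S) - measure nearest_law S\<bar> \<le> pi * (b\<^sup>2 - a\<^sup>2) * measure lborel S"
proof -
  have "bounded S" by (rule bounded_subset[OF bounded_annulus S(2)])
  have "prob (nearest_in S) \<le> exp (- pi * a\<^sup>2) * measure lborel S"
    using S \<open>bounded S\<close> \<open>0 \<le> a\<close> by (intro prob_nearest_in_le) auto
  moreover have "exp (- pi * b\<^sup>2) * measure lborel S \<le> prob (nearest_in S)"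
    using S \<open>0 \<le> a\<close> \<open>a \<le> b\<close> by (intro prob_nearest_in_ge) auto
  moreover have "exp (- pi * b\<^sup>2) * measure lborel S \<le> measure nearest_law S"
    "measure nearest_law S \<le> exp (- pi * a\<^sup>2) * measure lborel S"
    using measure_nearest_law_bounds[OF S \<open>0 \<le> a\<close>] by auto
  ultimately have "\<bar>prob (nearest_in S) - measure nearest_law S\<bar>
      \<le> (exp (- pi * a\<^sup>2) - exp (- pi * b\<^sup>2)) * measure lborel S"
    by (simp add: abs_le_iff left_diff_distrib)
  also have "\<dots> \<le> pi * (b\<^sup>2 - a\<^sup>2) * measure lborel S"
    using exp_minus_diff_le[of "pi * a\<^sup>2" "pi * b\<^sup>2"] \<open>0 \<le> a\<close> \<open>a \<le> b\<close>
    by (intro mult_right_mono) (auto simp: algebra_simps power_mono)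
  finally show ?thesis .
qed

lemma prob_nearest_in_bounded:
  assumes S: "S \<in> sets borel" "bounded S"
  shows "prob (nearest_in S) = measure nearest_law S"
proof -
  interpret law: prob_space nearest_law by (rule prob_space_nearest_law)
  obtain T where "0 < T" and S_ball: "S \<subseteq> ball 0 T"
    using S(2) bounded_subset_ballD by blast
  have "\<bar>prob (nearest_in S) - measure nearest_law S\<bar> \<le> 0 + 2 * pi * T * T * measure lborel S / real n"
    if "0 < n" for n
  proof -
    define h where "h = T / real n"
    define Sk where "Sk k = S \<inter> annulus (real k * h) (real (Suc k) * h)" for k
    have "0 < h" "real n * h = T" using \<open>0 < T\<close> \<open>0 < n\<close> by (auto simp: h_def)
    then have S_eq: "S = (\<Union>k<n. Sk k)"
      using UN_annulus_slices[OF \<open>0 < h\<close>, of n] S_ball by (auto simp: Sk_def)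
    have "bounded (Sk k)" for k
      using S(2) by (auto simp: Sk_def intro: bounded_subset)
    then have Sk: "Sk k \<in> sets borel" "emeasure lborel (Sk k) < \<infinity>" for k
      using S(1) emeasure_bounded_finite by (auto simp: Sk_def)
    have disj: "disjoint_family_on Sk {..<n}"
      using disjoint_family_annulus_slices[of h] by (auto simp: Sk_def disjoint_family_on_def)
    have "prob (nearest_in S) = (\<Sum>k<n. prob (nearest_in (Sk k)))"
      unfolding S_eq using Sk disj by (intro prob_nearest_in_finite_UN) auto
    moreover have "measure nearest_law S = (\<Sum>k<n. measure nearest_law (Sk k))"
      unfolding S_eq using Sk disj by (intro law.finite_measure_finite_Union) auto
    ultimately have "prob (nearest_in S) - measure nearest_law S
        = (\<Sum>k<n. prob (nearest_in (Sk k)) - measure nearest_law (Sk k))"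
      by (simp add: sum_subtractf)
    also have "\<bar>\<dots>\<bar> \<le> (\<Sum>k<n. pi * ((real (Suc k) * h)\<^sup>2 - (real k * h)\<^sup>2) * measure lborel (Sk k))"
      using Sk \<open>0 < h\<close>
      by (intro order.trans[OF sum_abs] sum_mono prob_nearest_in_annulus_approx) (auto simp: Sk_def)
    also have "\<dots> \<le> (\<Sum>k<n. 2 * pi * T * h * measure lborel (Sk k))"
    proof (rule sum_mono)
      fix k assume "k \<in> {..<n}"
      then have "pi * ((real (Suc k) * h)\<^sup>2 - (real k * h)\<^sup>2) \<le> pi * (2 * T * h)"
        using annulus_slice_width_le[of k n h] \<open>0 < h\<close> \<open>real n * h = T\<close> by simp
      then show "pi * ((real (Suc k) * h)\<^sup>2 - (real k * h)\<^sup>2) * measure lborel (Sk k)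
          \<le> 2 * pi * T * h * measure lborel (Sk k)"
        by (intro mult_right_mono) (simp_all add: mult_ac)
    qed
    also have "\<dots> = 2 * pi * T * h * measure lborel S"
      unfolding S_eq using Sk disj
      by (subst measure_finite_Union) (auto simp: less_top sum_distrib_left)
    finally show ?thesis by (simp add: h_def)
  qed
  then have "\<bar>prob (nearest_in S) - measure nearest_law S\<bar> \<le> 0"
    by (rule le_of_le_add_divide_nat)
  then show ?thesis by simp
qed

lemma prob_nearest_in:
  assumes S: "S \<in> sets borel"
  shows "prob (nearest_in S) = measure nearest_law S"
proof -
  interpret law: prob_space nearest_law by (rule prob_space_nearest_law)
  define Sm where "Sm m = S \<inter> ball 0 (real m)" for m
  have Sm: "Sm m \<in> sets borel" "bounded (Sm m)" for m
    using S by (auto simp: Sm_def)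
  have incseq: "incseq Sm"
    by (auto simp: incseq_def Sm_def)
  have UN: "(\<Union>m. Sm m) = S"
  proof (intro equalityI subsetI)
    fix c assume "c \<in> S"
    obtain m :: nat where "norm c < real m" using reals_Archimedean2 by blast
    then show "c \<in> (\<Union>m. Sm m)" using \<open>c \<in> S\<close> by (auto simp: Sm_def)
  qed (auto simp: Sm_def)
  have "incseq (\<lambda>m. nearest_in (Sm m))"
    unfolding incseq_def by (intro allI impI nearest_in_mono) (use incseq in \<open>simp add: incseq_def\<close>)
  then have "(\<lambda>m. prob (nearest_in (Sm m))) \<longlonglongrightarrow> prob (\<Union>m. nearest_in (Sm m))"
    using Sm by (intro finite_Lim_measure_incseq) (auto intro: sets_nearest_in)
  then have "(\<lambda>m. prob (nearest_in (Sm m))) \<longlonglongrightarrow> prob (nearest_in S)"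
    using UN by (simp add: nearest_in_UN[symmetric])
  moreover have "(\<lambda>m. measure nearest_law (Sm m)) \<longlonglongrightarrow> measure nearest_law S"
    using Sm incseq UN by (auto intro!: law.finite_Lim_measure_incseq)
  ultimately show ?thesis
    using prob_nearest_in_bounded[OF Sm] LIMSEQ_unique by simp
qed

lemma prob_nearest_in_acute:
  assumes "0 < a"
  shows "prob (nearest_in {C. acute_triangle (- a, 0) (a, 0) C}) = exp (- pi * a\<^sup>2) - erfc (sqrt pi * a)"
proof -
  interpret law: prob_space nearest_law by (rule prob_space_nearest_law)
  let ?strip = "{- a<..<a} \<times> (UNIV :: real set)"
  have "{C. acute_triangle (- a, 0) (a, 0) C} = ?strip - cball 0 a"
    using assms by (auto simp: acute_triangle_symmetric_base_iff abs_less_iff)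
  moreover have strip: "?strip \<in> sets borel"
    by (intro borel_open open_Times) auto
  ultimately have "prob (nearest_in {C. acute_triangle (- a, 0) (a, 0) C})
      = measure nearest_law ?strip - measure nearest_law (?strip \<inter> cball 0 a)"
    by (simp add: prob_nearest_in law.finite_measure_Diff')
  also have "?strip \<inter> cball 0 a = ball 0 a \<union> (sphere 0 a \<inter> ?strip)"
  proof (intro set_eqI)
    fix c :: "real \<times> real"
    have "\<bar>fst c\<bar> \<le> norm c" using norm_fst_le[of "fst c" "snd c"] by simp
    then show "c \<in> ?strip \<inter> cball 0 a \<longleftrightarrow> c \<in> ball 0 a \<union> (sphere 0 a \<inter> ?strip)"
      by (cases c) (auto simp: abs_less_iff)
  qed
  also have "measure nearest_law \<dots> = measure nearest_law (ball 0 a)"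
    using strip by (intro measure_Un_null_set null_set_Int2 sphere_null_sets_nearest_law) simp_all
  also have "\<dots> = 1 - exp (- pi * a\<^sup>2)"
    using assms by (simp add: measure_nearest_law_ball)
  also have "measure nearest_law ?strip = 1 - erfc (sqrt pi * a)"
    using assms by (simp add: measure_nearest_law_Times_UNIV measure_gauss_pi_centered)
  finally show ?thesis by simp
qed

end

theorem mainTheorem16:
  fixes M :: "'w measure" and P :: "'w \<Rightarrow> (real \<times> real) set"
  assumes "homogeneous_PPP M P"
  shows "measure M {\<omega>\<in>space M. \<exists>C\<in>P \<omega>.
            (\<forall>p\<in>P \<omega>. p \<noteq> C \<longrightarrow> norm C < norm p) \<and>
            acute_triangle (-1/2, 0) (1/2, 0) C}
         = exp (- pi / 4) - erfc (sqrt pi / 2)"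
proof -
  interpret unit_poisson_process M P by unfold_locales (rule assms)
  show ?thesis
    using prob_nearest_in_acute[of "1/2"] by (simp add: nearest_in_def power2_eq_square)
qed

end
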